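(* For all $k,m\in\mathbb{N}$, \[ Q(1,2k+1;2)=0\qquad\text{and}\qquad Q(m+1,2k-1;2)=0. \]
   Context: $s(n,k)$ ($n\ge k\ge 0$) denotes the signed Stirling numbers of the first kind, defined by $\frac{[\ln(1+x)]^k}{k!}=\sum_{n=k}^\infty s(n,k)\frac{x^n}{n!}$ for $|x|<1$; equivalently $\prod_{j=0}^{n-1}(z-j)=\sum_{k=0}^n s(n,k)z^k$. For $m\in\mathbb{N}$, $k\in\mathbb{N}_0$ and $\alpha\in\mathbb{R}$ define \[ Q(m,k;\alpha)=\sum_{\ell=0}^{k}\binom{m+\ell-1}{m-1}\, s(m+k-1,m+\ell-1)\left(\frac{m+k-\alpha}{2}\right)^{\ell}, \] with the convention $0^0=1$. *)

theory Defs
  imports Complex_Main "HOL-Combinatorics.Stirling"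
begin

definition sstirling :: "nat \<Rightarrow> nat \<Rightarrow> int" where
  "sstirling n k = (-1) ^ (n + k) * int (stirling n k)"

definition Q :: "nat \<Rightarrow> nat \<Rightarrow> real \<Rightarrow> real" where
  "Q m k \<alpha> = (\<Sum>l = 0..k. real ((m + l - 1) choose (m - 1))
       * real_of_int (sstirling (m + k - 1) (m + l - 1))
       * ((real (m + k) - \<alpha>) / 2) ^ l)"

end

theory Submission
  imports Defs
begin

text \<open>The generating polynomial \<open>G(z) = \<Sum>\<^sub>j s(n,j) z\<^sup>j = z(z-1)\<cdots>(z-n+1)\<close> has its roots
  \<open>0, \<dots>, n-1\<close> placed symmetrically about \<open>c = (n-1)/2\<close>, so \<open>G(c+t) = (-1)\<^sup>n G(c-t)\<close>.
  Hence the Taylor coefficient of \<open>G\<close> at \<open>c\<close> in degree \<open>i\<close> vanishes whenever \<open>n + i\<close> is odd.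
  Since \<open>(m + 1 + k - 2)/2 = c\<close> for \<open>n = m + k\<close>, the sum \<open>Q(m+1,k;2)\<close> is exactly the
  Taylor coefficient of degree \<open>m\<close>, and \<open>n + m = 2m + k\<close> is odd for odd \<open>k\<close>.\<close>

lemma sum_sstirling_power_eq_pochhammer:
  fixes z :: "'a :: comm_ring_1"
  shows "(\<Sum>j\<le>n. of_int (sstirling n j) * z ^ j) = (-1) ^ n * pochhammer (-z) n"
proof -
  have "(\<Sum>j\<le>n. of_int (sstirling n j) * z ^ j)
      = (\<Sum>j\<le>n. (-1) ^ n * (of_nat (stirling n j) * (-z) ^ j))"
    by (rule sum.cong) (simp_all add: sstirling_def power_add power_minus[of z])
  also have "\<dots> = (-1) ^ n * pochhammer (-z) n"
    by (simp add: sum_distrib_left[symmetric] stirling_pochhammer)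
  finally show ?thesis .
qed

lemma sum_sstirling_power_reflect:
  fixes c t :: "'a :: field_char_0"
  assumes "c = (of_nat n - 1) / 2"
  shows "(\<Sum>j\<le>n. of_int (sstirling n j) * (c + t) ^ j)
       = (-1) ^ n * (\<Sum>j\<le>n. of_int (sstirling n j) * (c - t) ^ j)"
proof -
  have "pochhammer (-(c + t)) n = (-1) ^ n * pochhammer (c + t - of_nat n + 1) n"
    by (rule pochhammer_minus)
  also have "c + t - of_nat n + 1 = -(c - t)"
    using assms by (simp add: field_simps)
  finally show ?thesis
    by (simp add: sum_sstirling_power_eq_pochhammer power_mult_distrib[symmetric])
qed

lemma sum_power_shift_expand:
  fixes c t :: "'a :: comm_semiring_1"
  shows "(\<Sum>j\<le>n. a j * (c + t) ^ j)
       = (\<Sum>i\<le>n. (\<Sum>j\<le>n. a j * of_nat (j choose i) * c ^ (j - i)) * t ^ i)"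
proof -
  have binomial: "(c + t) ^ j = (\<Sum>i\<le>n. of_nat (j choose i) * c ^ (j - i) * t ^ i)"
    if "j \<le> n" for j
  proof -
    have "(c + t) ^ j = (\<Sum>i\<le>j. of_nat (j choose i) * t ^ i * c ^ (j - i))"
      by (subst add.commute) (rule binomial_ring)
    also have "\<dots> = (\<Sum>i\<le>n. of_nat (j choose i) * c ^ (j - i) * t ^ i)"
      by (rule sum.mono_neutral_cong_left) (use that in \<open>simp_all add: mult_ac binomial_eq_0\<close>)
    finally show ?thesis .
  qed
  have "(\<Sum>j\<le>n. a j * (c + t) ^ j)
      = (\<Sum>j\<le>n. \<Sum>i\<le>n. a j * (of_nat (j choose i) * c ^ (j - i) * t ^ i))"
    by (rule sum.cong) (simp_all add: binomial sum_distrib_left)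
  also have "\<dots> = (\<Sum>i\<le>n. \<Sum>j\<le>n. a j * (of_nat (j choose i) * c ^ (j - i) * t ^ i))"
    by (rule sum.swap)
  also have "\<dots> = (\<Sum>i\<le>n. (\<Sum>j\<le>n. a j * of_nat (j choose i) * c ^ (j - i)) * t ^ i)"
    by (simp add: sum_distrib_right mult.assoc)
  finally show ?thesis .
qed

lemma polyfun_parity_coeff_eq_0:
  fixes d :: "nat \<Rightarrow> real"
  assumes parity: "\<And>t. (\<Sum>i\<le>n. d i * t ^ i) = (-1) ^ p * (\<Sum>i\<le>n. d i * (-t) ^ i)"
    and "odd (p + i)" "i \<le> n"
  shows "d i = 0"
proof -
  have "(\<Sum>i\<le>n. (d i - (-1) ^ (p + i) * d i) * t ^ i) = 0" for t :: real
  proof -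
    have "(-1) ^ p * (\<Sum>i\<le>n. d i * (-t) ^ i) = (\<Sum>i\<le>n. (-1) ^ (p + i) * d i * t ^ i)"
      by (simp add: sum_distrib_left power_add power_minus[of t] mult_ac)
    with parity[of t] show ?thesis
      by (simp add: left_diff_distrib sum_subtractf)
  qed
  then have "d i - (-1) ^ (p + i) * d i = 0"
    using \<open>i \<le> n\<close> polyfun_eq_0[of "\<lambda>i. d i - (-1) ^ (p + i) * d i" n] by blast
  with \<open>odd (p + i)\<close> show ?thesis by simp
qed

lemma sstirling_taylor_coeff_eq_0:
  assumes "c = (real n - 1) / 2" and "odd (n + i)" and "i \<le> n"
  shows "(\<Sum>j\<le>n. of_int (sstirling n j) * real (j choose i) * c ^ (j - i)) = 0"
proof (rule polyfun_parity_coeff_eq_0[where p = n and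
    d = "\<lambda>i. \<Sum>j\<le>n. of_int (sstirling n j) * real (j choose i) * c ^ (j - i)"])
  fix t :: real
  show "(\<Sum>i\<le>n. (\<Sum>j\<le>n. of_int (sstirling n j) * real (j choose i) * c ^ (j - i)) * t ^ i)
      = (-1) ^ n * (\<Sum>i\<le>n. (\<Sum>j\<le>n. of_int (sstirling n j) * real (j choose i) * c ^ (j - i)) * (-t) ^ i)"
    using sum_sstirling_power_reflect[OF assms(1), of t]
    by (simp only: sum_power_shift_expand[symmetric] diff_conv_add_uminus)
qed (use assms in auto)

lemma Q_Suc_eq_sstirling_taylor_coeff:
  "Q (m + 1) k 2 = (\<Sum>j\<le>m + k. of_int (sstirling (m + k) j) * real (j choose m)
                        * ((real (m + k) - 1) / 2) ^ (j - m))"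
  (is "_ = (\<Sum>j\<le>m + k. ?f j)")
proof -
  have "Q (m + 1) k 2 = (\<Sum>l = 0..k. ?f (l + m))"
    unfolding Q_def by (rule sum.cong) (simp_all add: algebra_simps)
  also have "\<dots> = (\<Sum>j = m..m + k. ?f j)"
    using sum.shift_bounds_cl_nat_ivl[of ?f 0 m k] by (simp add: add.commute)
  also have "\<dots> = (\<Sum>j\<le>m + k. ?f j)"
    by (rule sum.mono_neutral_left) auto
  finally show ?thesis .
qed

lemma Q_Suc_odd_eq_0:
  assumes "odd k"
  shows "Q (m + 1) k 2 = 0"
  unfolding Q_Suc_eq_sstirling_taylor_coeff
  by (rule sstirling_taylor_coeff_eq_0) (use assms in auto)

theorem corollary2p2:
  fixes k m :: nat
  assumes "k \<ge> 1" and "m \<ge> 1"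
  shows "Q 1 (2 * k + 1) 2 = 0 \<and> Q (m + 1) (2 * k - 1) 2 = 0"
proof
  show "Q 1 (2 * k + 1) 2 = 0"
    using Q_Suc_odd_eq_0[of "2 * k + 1" 0] by simp
  show "Q (m + 1) (2 * k - 1) 2 = 0"
    using Q_Suc_odd_eq_0[of "2 * k - 1" m] \<open>k \<ge> 1\<close> by simp
qed

end
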